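(* Let $K\subseteq\mathbb{R}^d$ be a convex body and let $r\ge 0$. Let $E$ be a John ellipsoid of $K$, with center $c$, and let $H$ be a hyperplane passing through $c$, which divides $K$ into the two pieces $K^+=K\cap H^+$ and $K^-=K\cap H^-$, where $H^+$ and $H^-$ are the two closed half-spaces bounded by $H$. Then $$\mathsf{Vol}(K^+ + r\mathsf{B})\le\Big(1-\frac{1}{10d^d}\Big)\Big(\mathsf{Vol}(K^+ + r\mathsf{B})+\mathsf{Vol}(K^- + r\mathsf{B})\Big).$$
   Context: A convex body is a compact convex subset of $\mathbb{R}^d$ with nonempty interior. $\mathsf{B}$ is the closed unit Euclidean ball in $\mathbb{R}^d$, $+$ denotes Minkowski sum $X+Y=\{x+y:x\in X,y\in Y\}$, and $\mathsf{Vol}$ is Lebesgue measure. A John ellipsoid of $K$ is a set $E=A^{-1}(q+\mathsf{B})$, where $q\in\mathbb{R}^d$ and $A$ is an invertible linear map such that $q+\mathsf{B}\subseteq A(K)\subseteq q+d\mathsf{B}$ (such $q$ and $A$ always exist); its center is $A^{-1}q$. *)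

theory Defs
  imports "HOL-Analysis.Analysis"
begin

definition convex_body :: "'a::euclidean_space set \<Rightarrow> bool" where
  "convex_body K \<longleftrightarrow> compact K \<and> convex K \<and> interior K \<noteq> {}"

definition mink_sum :: "'a::euclidean_space set \<Rightarrow> 'a set \<Rightarrow> 'a set" where
  "mink_sum X Y = {x + y | x y. x \<in> X \<and> y \<in> Y}"

text \<open>E = A^{-1}(q + B) is a John ellipsoid of K, given by the data (A, q):
  A invertible linear with q + B \<subseteq> A(K) \<subseteq> q + d B, d the dimension.\<close>
definition john_data :: "'a::euclidean_space set \<Rightarrow> ('a \<Rightarrow> 'a) \<Rightarrow> 'a \<Rightarrow> bool" where
  "john_data K A q \<longleftrightarrow> linear A \<and> bij A \<and>
     cball q 1 \<subseteq> A ` K \<and> A ` K \<subseteq> cball q (real DIM('a))"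

end

theory Submission
  imports Defs
begin

text \<open>The John ellipsoid \<open>E\<close> lies in \<open>K\<close>, is centrally symmetric about \<open>c\<close>, and its
  dilate by the factor \<open>d\<close> about \<open>c\<close> contains \<open>K\<close>. Since \<open>r B \<subseteq> d r B\<close>, this gives
  \<open>Vol(K\<^sup>+ + r B) \<le> d\<^sup>d Vol(E + r B)\<close>. The point reflection through \<open>c\<close> maps
  \<open>E\<^sup>+ + r B\<close> into \<open>E\<^sup>- + r B\<close>, so \<open>Vol(E + r B) \<le> 2 Vol(E\<^sup>- + r B) \<le> 2 Vol(K\<^sup>- + r B)\<close>.
  The resulting bound \<open>Vol(K\<^sup>+ + r B) \<le> 2 d\<^sup>d Vol(K\<^sup>- + r B)\<close> is stronger than the claim.\<close>

definition homothety :: "'a::real_vector \<Rightarrow> real \<Rightarrow> 'a \<Rightarrow> 'a" where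
  "homothety c t x = t *\<^sub>R x + (1 - t) *\<^sub>R c"

lemma homothety_homothety: "homothety c s (homothety c t x) = homothety c (s * t) x"
  by (simp add: homothety_def algebra_simps)

lemma homothety_one [simp]: "homothety c 1 x = x"
  by (simp add: homothety_def)

lemma dist_homothety:
  fixes c :: "'a::real_normed_vector"
  shows "dist c (homothety c t x) = \<bar>t\<bar> * dist c x"
proof -
  have "c - homothety c t x = t *\<^sub>R (c - x)"
    by (simp add: homothety_def algebra_simps)
  then show ?thesis
    unfolding dist_norm by simp
qed

lemma homothety_cball:
  fixes c :: "'a::real_normed_vector"
  assumes "t \<noteq> 0"
  shows "homothety c t ` cball c \<rho> = cball c (\<bar>t\<bar> * \<rho>)"
proof
  show "homothety c t ` cball c \<rho> \<subseteq> cball c (\<bar>t\<bar> * \<rho>)"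
    by (auto simp: dist_homothety mult_left_mono)
  show "cball c (\<bar>t\<bar> * \<rho>) \<subseteq> homothety c t ` cball c \<rho>"
  proof
    fix y assume "y \<in> cball c (\<bar>t\<bar> * \<rho>)"
    then have "homothety c (1 / t) y \<in> cball c \<rho>"
      using assms by (simp add: dist_homothety field_simps)
    moreover have "y = homothety c t (homothety c (1 / t) y)"
      using assms by (simp add: homothety_homothety)
    ultimately show "y \<in> homothety c t ` cball c \<rho>"
      by blast
  qed
qed

lemma linear_homothety: "linear f \<Longrightarrow> f (homothety c t x) = homothety (f c) t (f x)"
  by (simp add: homothety_def linear_add linear_scale)

lemma inner_homothety_reflect: "u \<bullet> homothety c (-1) x = 2 * (u \<bullet> c) - u \<bullet> x"
  by (simp add: homothety_def inner_add_right inner_diff_right)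

lemma compact_homothety_image:
  fixes S :: "'a::real_normed_vector set"
  assumes "compact S"
  shows "compact (homothety c t ` S)"
  unfolding homothety_def
  by (intro compact_continuous_image continuous_on_add continuous_on_scaleR continuous_on_const
      continuous_on_id assms)

lemma measure_homothety:
  fixes S :: "'a::euclidean_space set"
  shows "measure lebesgue (homothety c t ` S) = \<bar>t\<bar> ^ DIM('a) * measure lebesgue S"
  unfolding homothety_def by (rule measure_lebesgue_affine)

lemma compact_mink_sum: "compact X \<Longrightarrow> compact Y \<Longrightarrow> compact (mink_sum X Y)"
  unfolding mink_sum_def by (rule compact_sums)

lemma mink_sum_mono: "X \<subseteq> X' \<Longrightarrow> Y \<subseteq> Y' \<Longrightarrow> mink_sum X Y \<subseteq> mink_sum X' Y'"
  unfolding mink_sum_def by blast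

lemma mink_sum_Un: "mink_sum (X \<union> X') Y = mink_sum X Y \<union> mink_sum X' Y"
  unfolding mink_sum_def by blast

lemma homothety_mink_sum:
  "homothety c t ` mink_sum X Y = mink_sum (homothety c t ` X) ((\<lambda>y. t *\<^sub>R y) ` Y)"
proof -
  have homothety_add: "homothety c t (x + y) = homothety c t x + t *\<^sub>R y" for x y
    by (simp add: homothety_def algebra_simps)
  show ?thesis
  proof
    show "homothety c t ` mink_sum X Y \<subseteq> mink_sum (homothety c t ` X) ((\<lambda>y. t *\<^sub>R y) ` Y)"
      unfolding mink_sum_def by (auto simp: homothety_add) blast
    show "mink_sum (homothety c t ` X) ((\<lambda>y. t *\<^sub>R y) ` Y) \<subseteq> homothety c t ` mink_sum X Y"
      unfolding mink_sum_def by (auto simp flip: homothety_add) blast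
  qed
qed

lemma measure_mono_compact:
  fixes S T :: "'a::euclidean_space set"
  assumes "compact S" and "compact T" and "S \<subseteq> T"
  shows "measure lebesgue S \<le> measure lebesgue T"
  using assms by (intro measure_mono_fmeasurable fmeasurableD lmeasurable_compact)

lemma measure_mink_sum_le_twice_half:
  fixes S Y :: "'a::euclidean_space set"
  assumes "compact S" and S_symmetric: "homothety c (-1) ` S \<subseteq> S"
    and "compact Y" and Y_symmetric: "uminus ` Y \<subseteq> Y"
  shows "measure lebesgue (mink_sum S Y)
    \<le> 2 * measure lebesgue (mink_sum (S \<inter> {x. u \<bullet> x \<le> u \<bullet> c}) Y)"
proof -
  define Sp where "Sp = S \<inter> {x. u \<bullet> x \<ge> u \<bullet> c}"
  define Sm where "Sm = S \<inter> {x. u \<bullet> x \<le> u \<bullet> c}"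
  have compact_halves: "compact (mink_sum Sp Y)" "compact (mink_sum Sm Y)"
    unfolding Sp_def Sm_def
    by (intro compact_mink_sum compact_Int_closed closed_halfspace_ge closed_halfspace_le assms)+
  have "homothety c (-1) ` Sp \<subseteq> Sm"
    using S_symmetric unfolding Sp_def Sm_def by (auto simp: inner_homothety_reflect)
  moreover have "(\<lambda>y. (-1) *\<^sub>R y) ` Y \<subseteq> Y"
    using Y_symmetric by simp
  ultimately have reflect: "homothety c (-1) ` mink_sum Sp Y \<subseteq> mink_sum Sm Y"
    unfolding homothety_mink_sum by (rule mink_sum_mono)
  have "measure lebesgue (mink_sum Sp Y)
      = measure lebesgue (homothety c (-1) ` mink_sum Sp Y)"
    by (simp add: measure_homothety)
  also have "\<dots> \<le> measure lebesgue (mink_sum Sm Y)"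
    using reflect compact_halves by (intro measure_mono_compact compact_homothety_image)
  finally have half_le:
    "measure lebesgue (mink_sum Sp Y) \<le> measure lebesgue (mink_sum Sm Y)" .
  have "S = Sp \<union> Sm"
    unfolding Sp_def Sm_def by auto
  then have split: "mink_sum S Y = mink_sum Sp Y \<union> mink_sum Sm Y"
    by (simp add: mink_sum_Un)
  have "measure lebesgue (mink_sum S Y)
      \<le> measure lebesgue (mink_sum Sp Y) + measure lebesgue (mink_sum Sm Y)"
    unfolding split by (intro measure_Un_le fmeasurableD lmeasurable_compact compact_halves)
  with half_le show ?thesis
    unfolding Sm_def by simp
qed

lemma measure_mink_sum_halfspace_le:
  fixes K E :: "'a::euclidean_space set"
  assumes "compact K" and "compact E" and E_in_K: "E \<subseteq> K"
    and E_symmetric: "homothety c (-1) ` E \<subseteq> E"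
    and K_in_dilate: "K \<subseteq> homothety c t ` E" and t_ge_1: "1 \<le> t" and "0 \<le> r"
  shows "measure lebesgue (mink_sum (K \<inter> {x. u \<bullet> x \<ge> u \<bullet> c}) (cball 0 r))
    \<le> 2 * t ^ DIM('a) *
      measure lebesgue (mink_sum (K \<inter> {x. u \<bullet> x \<le> u \<bullet> c}) (cball 0 r))"
proof -
  let ?B = "cball (0::'a) r"
  have "?B \<subseteq> cball 0 (t * r)"
    using t_ge_1 \<open>0 \<le> r\<close>
    by (intro cball_subset_cball_iff[THEN iffD2]) (simp add: mult_le_cancel_right1)
  also have "\<dots> = (\<lambda>y. t *\<^sub>R y) ` ?B"
    using t_ge_1 cball_scale[of t 0 r, symmetric] by simp
  finally have "mink_sum (K \<inter> {x. u \<bullet> x \<ge> u \<bullet> c}) ?B \<subseteq> homothety c t ` mink_sum E ?B"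
    unfolding homothety_mink_sum using K_in_dilate by (intro mink_sum_mono) auto
  then have "measure lebesgue (mink_sum (K \<inter> {x. u \<bullet> x \<ge> u \<bullet> c}) ?B)
      \<le> measure lebesgue (homothety c t ` mink_sum E ?B)"
    by (intro measure_mono_compact compact_homothety_image compact_mink_sum compact_Int_closed
        closed_halfspace_ge compact_cball assms)
  also have "\<dots> = t ^ DIM('a) * measure lebesgue (mink_sum E ?B)"
    using t_ge_1 by (simp add: measure_homothety)
  also have "\<dots> \<le> t ^ DIM('a) *
      (2 * measure lebesgue (mink_sum (E \<inter> {x. u \<bullet> x \<le> u \<bullet> c}) ?B))"
    using t_ge_1 E_symmetric
    by (intro mult_left_mono measure_mink_sum_le_twice_half compact_cball assms) auto
  also have "\<dots> \<le> t ^ DIM('a) *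
      (2 * measure lebesgue (mink_sum (K \<inter> {x. u \<bullet> x \<le> u \<bullet> c}) ?B))"
    using t_ge_1 E_in_K
    by (intro mult_left_mono measure_mono_compact mink_sum_mono compact_mink_sum compact_Int_closed
        closed_halfspace_le compact_cball assms) auto
  finally show ?thesis
    by (simp add: algebra_simps)
qed

lemma john_data_ellipsoid:
  fixes K :: "'a::euclidean_space set"
  assumes "john_data K A q"
  defines "E \<equiv> inv A ` cball q 1"
  shows "compact E" and "E \<subseteq> K" and "homothety (inv A q) (-1) ` E \<subseteq> E"
    and "K \<subseteq> homothety (inv A q) (real DIM('a)) ` E"
proof -
  have "linear A" "inj A" and ball_in_K: "cball q 1 \<subseteq> A ` K"
    and K_in_ball: "A ` K \<subseteq> cball q (real DIM('a))"
    using assms(1) unfolding john_data_def by (auto simp: bij_is_inj)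
  then have lin_inv: "linear (inv A)" and inv_A: "\<And>X. inv A ` A ` X = X"
    by (auto simp: inj_linear_imp_inv_linear image_inv_f_f)
  have inv_homothety: "inv A ` homothety q t ` X = homothety (inv A q) t ` inv A ` X" for t X
    unfolding image_image using lin_inv by (simp add: linear_homothety)
  show "compact E"
    unfolding E_def using lin_inv
    by (intro compact_continuous_image linear_continuous_on compact_cball)
      (simp add: linear_conv_bounded_linear)
  show "E \<subseteq> K"
    unfolding E_def using image_mono[OF ball_in_K, of "inv A"] inv_A by simp
  show "homothety (inv A q) (-1) ` E \<subseteq> E"
    unfolding E_def inv_homothety[symmetric] by (simp add: homothety_cball)
  have "K = inv A ` A ` K"
    using inv_A by simp
  also have "\<dots> \<subseteq> inv A ` homothety q (real DIM('a)) ` cball q 1"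
    using image_mono[OF K_in_ball, of "inv A"] by (simp add: homothety_cball)
  finally show "K \<subseteq> homothety (inv A q) (real DIM('a)) ` E"
    unfolding E_def inv_homothety .
qed

lemma le_fraction_of_sum:
  fixes a b D :: real
  assumes "0 \<le> b" and "1 \<le> D" and "a \<le> 2 * D * b"
  shows "a \<le> (1 - 1 / (10 * D)) * (a + b)"
proof -
  have "a / (10 * D) \<le> b / 5"
    using assms by (simp add: field_simps)
  also have "\<dots> \<le> (1 - 1 / (10 * D)) * b"
  proof -
    have "1 / (10 * D) \<le> 4 / 5"
      using assms(2) by (simp add: field_simps)
    then show ?thesis
      using mult_right_mono[OF _ assms(1), of "1 / 5" "1 - 1 / (10 * D)"] by simp
  qed
  finally show ?thesis
    by (simp add: algebra_simps add_divide_distrib)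
qed

theorem lemma4p1:
  fixes K :: "'a::euclidean_space set" and r :: real
    and A :: "'a \<Rightarrow> 'a" and q c u :: 'a
  assumes "convex_body K"
    and "r \<ge> 0"
    and "john_data K A q"
    and "c = inv A q"
    and "u \<noteq> 0"
  shows "measure lebesgue (mink_sum (K \<inter> {x. u \<bullet> x \<ge> u \<bullet> c}) (cball 0 r))
     \<le> (1 - 1 / (10 * real DIM('a) ^ DIM('a))) *
        (measure lebesgue (mink_sum (K \<inter> {x. u \<bullet> x \<ge> u \<bullet> c}) (cball 0 r))
       + measure lebesgue (mink_sum (K \<inter> {x. u \<bullet> x \<le> u \<bullet> c}) (cball 0 r)))"
proof (rule le_fraction_of_sum)
  have dim_ge_1: "1 \<le> real DIM('a)"
    by (simp add: Suc_le_eq)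
  then show "1 \<le> real DIM('a) ^ DIM('a)"
    by simp
  have "compact K"
    using assms(1) unfolding convex_body_def by blast
  from measure_mink_sum_halfspace_le[OF this john_data_ellipsoid[OF assms(3)] dim_ge_1 assms(2)]
  show "measure lebesgue (mink_sum (K \<inter> {x. u \<bullet> x \<ge> u \<bullet> c}) (cball 0 r))
    \<le> 2 * real DIM('a) ^ DIM('a) *
      measure lebesgue (mink_sum (K \<inter> {x. u \<bullet> x \<le> u \<bullet> c}) (cball 0 r))"
    unfolding assms(4) .
qed simp

end
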